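(* Let $\gamma_2>\gamma_1>0$ and let $k_a\ge 1$ be an integer. Consider two agents, Alice (A) and Bob (B), whose states satisfy for $k=0,\dots,k_a-1$ $$p_X^{(k+1)}=p_X^{(k)}+v_X^{(k)},\qquad X\in\{A,B\},$$ and let $a_{AB}^{(k)}\neq 0$ ($k=0,\dots,k_a-1$) be known weights and $$u_{AB}^{(k)}=\gamma_1a_{AB}^{(k)}\big(p_B^{(k)}-p_A^{(k)}\big)+\gamma_2a_{AB}^{(k)}\big(v_B^{(k)}-v_A^{(k)}\big),\qquad k=0,\dots,k_a-1.$$ Suppose $|p_B^{(k_a)}-p_A^{(k_a)}|\le\delta$ for some $\delta\ge 0$. Set $r=\frac{\gamma_2}{\gamma_2-\gamma_1}$, $$\varphi_k=\frac{1}{\gamma_1-\gamma_2}\Big(\gamma_1p_A^{(k)}+\gamma_2v_A^{(k)}+\frac{u_{AB}^{(k)}}{a_{AB}^{(k)}}\Big),$$ and define the estimates (computable from $p_A^{(k)},v_A^{(k)},u_{AB}^{(k)},a_{AB}^{(k)}$ only) $$\hat p_B^{(0)}=r^{k_a}p_A^{(k_a)}+\sum_{k=0}^{k_a-1}r^{k}\varphi_k,\qquad \hat v_B^{(0)}=-\frac{\gamma_1}{\gamma_2}\hat p_B^{(0)}-\frac{\gamma_2-\gamma_1}{\gamma_2}\varphi_0 .$$ Then the errors $\varepsilon_p=\hat p_B^{(0)}-p_B^{(0)}$ and $\varepsilon_v=\hat v_B^{(0)}-v_B^{(0)}$ satisfy $$|\varepsilon_p|\le\Big(\frac{\gamma_2}{\gamma_2-\gamma_1}\Big)^{k_a}\delta,\qquad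 |\varepsilon_v|\le\frac{\gamma_1\gamma_2^{k_a-1}}{(\gamma_2-\gamma_1)^{k_a}}\delta.$$
   Context: This models a curious agent Alice estimating the initial position and velocity of a neighbor Bob in a network of double-integrator agents $p^{(k+1)}=p^{(k)}+v^{(k)}$, $v^{(k+1)}=v^{(k)}+u^{(k)}$ under the consensus law $u_i^{(k)}=\sum_j\gamma_1a_{ij}^{(k)}(p_j^{(k)}-p_i^{(k)})+\gamma_2a_{ij}^{(k)}(v_j^{(k)}-v_i^{(k)})$; $u_{AB}^{(k)}$ is Bob's contribution to Alice's input, and the coupling weights $a_{AB}^{(k)}$ are public. The condition $|p_B^{(k_a)}-p_A^{(k_a)}|\le\delta$ is called local $\delta$-agreement at time $k_a$. *)

theory Defs
  imports "HOL-Analysis.Analysis"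
begin

end

theory Submission
  imports Defs
begin

text \<open>Dividing Bob's contribution by the public weight and adding back her own terms, Alice
  observes \<open>\<phi> k = (g1 pB k + g2 vB k) / (g1 - g2)\<close>. Eliminating the velocity by
  \<open>vB k = pB (k+1) - pB k\<close> gives \<open>\<phi> k = pB k - r pB (k+1)\<close>, so \<open>\<Sum>k<ka. r^k \<phi> k\<close>
  telescopes to \<open>pB 0 - r^ka pB ka\<close>. Hence the position error is exactly
  \<open>r^ka (pA ka - pB ka)\<close>, which \<open>\<delta>\<close>-agreement bounds, and the velocity error is
  \<open>-g1/g2\<close> times the position error.\<close>

lemma sum_power_weighted_telescope:
  fixes r :: "'a::comm_ring_1"
  assumes "\<And>k. k < n \<Longrightarrow> \<phi> k = x k - r * x (Suc k)"
  shows "(\<Sum>k<n. r ^ k * \<phi> k) = x 0 - r ^ n * x n"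
  using assms
proof (induction n)
  case 0
  then show ?case by simp
next
  case (Suc n)
  then have "(\<Sum>k<Suc n. r ^ k * \<phi> k) = x 0 - r ^ n * x n + r ^ n * (x n - r * x (Suc n))"
    by simp
  then show ?case by (simp add: algebra_simps)
qed

lemma consensus_input_reveals_neighbour:
  fixes g1 g2 a :: "'a::field"
  assumes "a \<noteq> 0"
    and "u = g1 * a * (pB - pA) + g2 * a * (vB - vA)"
  shows "g1 * pA + g2 * vA + u / a = g1 * pB + g2 * vB"
  using assms by (simp add: field_simps)

lemma combination_eq_next_position:
  fixes g1 g2 :: "'a::field"
  assumes "g1 \<noteq> g2" and "pB' = pB + vB"
  shows "(g1 * pB + g2 * vB) / (g1 - g2) = pB - g2 / (g2 - g1) * pB'"
proof -
  have "g1 - g2 \<noteq> 0" "g2 - g1 \<noteq> 0" using assms(1) by auto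
  then show ?thesis using assms(2) by (simp add: field_simps)
qed

lemma power_ratio_times_ratio:
  fixes g1 g2 :: "'a::field"
  assumes "g2 \<noteq> 0" and "1 \<le> n"
  shows "g1 / g2 * (g2 / (g2 - g1)) ^ n = g1 * g2 ^ (n - 1) / (g2 - g1) ^ n"
proof -
  have "g2 ^ n = g2 * g2 ^ (n - 1)"
    using assms(2) by (simp add: power_eq_if)
  then show ?thesis using assms(1) by (simp add: power_divide)
qed

theorem theorem2:
  fixes g1 g2 \<delta> :: real and ka :: nat
    and pA vA pB vB a u :: "nat \<Rightarrow> real"
  assumes g: "0 < g1" "g1 < g2"
    and ka: "1 \<le> ka"
    and dynA: "\<And>k. k < ka \<Longrightarrow> pA (Suc k) = pA k + vA k"
    and dynB: "\<And>k. k < ka \<Longrightarrow> pB (Suc k) = pB k + vB k"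
    and a_nz: "\<And>k. k < ka \<Longrightarrow> a k \<noteq> 0"
    and u_def: "\<And>k. k < ka \<Longrightarrow>
        u k = g1 * a k * (pB k - pA k) + g2 * a k * (vB k - vA k)"
    and \<delta>: "0 \<le> \<delta>"
    and agree: "\<bar>pB ka - pA ka\<bar> \<le> \<delta>"
  shows "let r = g2 / (g2 - g1);
             \<phi> = (\<lambda>k. (1 / (g1 - g2)) * (g1 * pA k + g2 * vA k + u k / a k));
             pB0 = r ^ ka * pA ka + (\<Sum>k<ka. r ^ k * \<phi> k);
             vB0 = - (g1 / g2) * pB0 - ((g2 - g1) / g2) * \<phi> 0
         in \<bar>pB0 - pB 0\<bar> \<le> (g2 / (g2 - g1)) ^ ka * \<delta>
          \<and> \<bar>vB0 - vB 0\<bar> \<le> g1 * g2 ^ (ka - 1) / (g2 - g1) ^ ka * \<delta>"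
proof -
  define r where "r = g2 / (g2 - g1)"
  define \<phi> where "\<phi> = (\<lambda>k. (1 / (g1 - g2)) * (g1 * pA k + g2 * vA k + u k / a k))"
  define pB0 where "pB0 = r ^ ka * pA ka + (\<Sum>k<ka. r ^ k * \<phi> k)"
  define vB0 where "vB0 = - (g1 / g2) * pB0 - ((g2 - g1) / g2) * \<phi> 0"
  have \<phi>_bob: "\<phi> k = (g1 * pB k + g2 * vB k) / (g1 - g2)" if "k < ka" for k
    using consensus_input_reveals_neighbour[OF a_nz[OF that] u_def[OF that]]
    unfolding \<phi>_def by simp
  have "\<phi> k = pB k - r * pB (Suc k)" if "k < ka" for k
    using \<phi>_bob[OF that] combination_eq_next_position[OF _ dynB[OF that]] g
    unfolding r_def by simp
  then have "(\<Sum>k<ka. r ^ k * \<phi> k) = pB 0 - r ^ ka * pB ka"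
    by (rule sum_power_weighted_telescope)
  then have err_p: "pB0 - pB 0 = r ^ ka * (pA ka - pB ka)"
    unfolding pB0_def by (simp add: algebra_simps)
  have err_v: "vB0 - vB 0 = - (g1 / g2) * (pB0 - pB 0)"
    using \<phi>_bob[of 0] ka g unfolding vB0_def by (simp add: field_simps)
  have bound_p: "\<bar>pB0 - pB 0\<bar> \<le> r ^ ka * \<delta>"
    unfolding err_p abs_mult using agree g
    by (simp add: r_def abs_minus_commute mult_left_mono)
  have "\<bar>vB0 - vB 0\<bar> = g1 / g2 * \<bar>pB0 - pB 0\<bar>"
    unfolding err_v abs_mult using g by simp
  also have "\<dots> \<le> g1 / g2 * (r ^ ka * \<delta>)"
    using bound_p g by (intro mult_left_mono) auto
  also have "\<dots> = g1 / g2 * r ^ ka * \<delta>"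
    by (simp only: mult.assoc)
  also have "\<dots> = g1 * g2 ^ (ka - 1) / (g2 - g1) ^ ka * \<delta>"
    using g by (simp only: r_def power_ratio_times_ratio[OF _ ka])
  finally show ?thesis
    using bound_p
    unfolding Let_def r_def[symmetric] \<phi>_def[symmetric] pB0_def[symmetric] vB0_def[symmetric]
    by (simp add: r_def)
qed

end
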